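(* For a solution as in the setting on $S^1\times(R_s,R_i]$ with $0<R_s<R_i$, define $\tilde{\mathcal{E}}(R)=\mathcal{E}(R)+\int_{S^1}\frac{e^{2\beta}K^2}{4\sqrt\alpha\,R^4}\,d\theta$. Then $$\frac{d\tilde{\mathcal{E}}}{dR}=-\int_{S^1}\left(\frac{e^{2\beta}K^2}{\sqrt\alpha\,R^5}+\frac{2U_R^2}{\sqrt\alpha\,R}+\frac{\sqrt\alpha\,e^{4U}A_\theta^2}{2R^3}\right)d\theta\le 0,$$ and for every $R_k\in(R_s,R_i]$, $\tilde{\mathcal{E}}(R_k)\le\tilde{\mathcal{E}}(R_i)\,(R_i/R_k)^4$.
   Context: Setting. A smooth vacuum $T^2$ symmetric spacetime in areal coordinates $(\theta,x,y,R)$, $\theta\in S^1=\mathbb{R}/\mathbb{Z}$, with metric $g=e^{2(\nu-U)}(-\alpha\,dR^2+d\theta^2)+e^{2U}[dx+A\,dy+(G+AH)\,d\theta]^2+e^{-2U}R^2(dy+H\,d\theta)^2$, where $\alpha>0,\nu,U,A,G,H$ are smooth functions of $(\theta,R)$ only, periodic in $\theta$; $K\ge0$ is the constant twist, the other twist vanishing; $\beta=\nu+\tfrac12\ln\alpha$. The vacuum equations are: $\beta_R=\sqrt{\alpha}Rh-\frac{e^{2\beta}K^2}{4R^3}$, $\beta_\theta=2R\big(U_RU_\theta+\frac{e^{4U}}{4R^2}A_RA_\theta\big)$, $\alpha_R=-\frac{\alpha e^{2\beta}K^2}{R^3}$, $U_{RR}-\alpha U_{\theta\theta}=-\frac{U_R}{R}+\frac{\alpha_RU_R}{2\alpha}+\frac{\alpha_\theta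 U_\theta}{2}+\frac{e^{4U}}{2R^2}(A_R^2-\alpha A_\theta^2)$, $A_{RR}-\alpha A_{\theta\theta}=\frac{A_R}{R}+\frac{\alpha_RA_R}{2\alpha}+\frac{\alpha_\theta A_\theta}{2}-4A_RU_R+4\alpha A_\theta U_\theta$, $G_R=-AH_R$, $H_R=\frac{e^{2\beta}K}{\sqrt{\alpha}R^3}$, with $h=\frac{U_R^2}{\sqrt\alpha}+\sqrt\alpha\,U_\theta^2+\frac{e^{4U}}{4R^2}\Big(\frac{A_R^2}{\sqrt\alpha}+\sqrt\alpha\,A_\theta^2\Big)$ and $\mathcal{E}(R)=\int_{S^1}h\,d\theta$. *)

theory Defs
  imports "HOL-Analysis.Analysis"
begin

definition dth :: "(real \<Rightarrow> real \<Rightarrow> real) \<Rightarrow> real \<Rightarrow> real \<Rightarrow> real" where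
  "dth f \<theta> R = deriv (\<lambda>t. f t R) \<theta>"

definition dR :: "(real \<Rightarrow> real \<Rightarrow> real) \<Rightarrow> real \<Rightarrow> real \<Rightarrow> real" where
  "dR f \<theta> R = deriv (\<lambda>r. f \<theta> r) R"

fun Ck :: "nat \<Rightarrow> (real \<times> real) set \<Rightarrow> (real \<Rightarrow> real \<Rightarrow> real) \<Rightarrow> bool" where
  "Ck 0 S f = continuous_on S (\<lambda>p. f (fst p) (snd p))"
| "Ck (Suc k) S f =
     (continuous_on S (\<lambda>p. f (fst p) (snd p)) \<and>
      (\<forall>p\<in>S. (\<lambda>t. f t (snd p)) differentiable (at (fst p)) \<and>
             (\<lambda>r. f (fst p) r) differentiable (at (snd p))) \<and>
      Ck k S (dth f) \<and> Ck k S (dR f))"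

definition smooth_on2 :: "(real \<times> real) set \<Rightarrow> (real \<Rightarrow> real \<Rightarrow> real) \<Rightarrow> bool" where
  "smooth_on2 S f \<longleftrightarrow> (\<forall>k. Ck k S f)"

text \<open>Smooth on the strip S^1 x (Rs,Ri]: smooth on an open neighbourhood of
  R x (Rs,Ri] (the closed end Ri is a smooth boundary), and 1-periodic in theta.\<close>

definition smooth_periodic :: "real \<Rightarrow> real \<Rightarrow> (real \<Rightarrow> real \<Rightarrow> real) \<Rightarrow> bool" where
  "smooth_periodic Rs Ri f \<longleftrightarrow>
     (\<exists>W. open W \<and> UNIV \<times> {Rs<..Ri} \<subseteq> W \<and> smooth_on2 W f) \<and>
     (\<forall>\<theta> R. R \<in> {Rs<..Ri} \<longrightarrow> f (\<theta> + 1) R = f \<theta> R)"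

text \<open>Energy density h and energy E(R) = integral over S^1 = [0,1].\<close>

definition hdens :: "(real \<Rightarrow> real \<Rightarrow> real) \<Rightarrow> (real \<Rightarrow> real \<Rightarrow> real) \<Rightarrow> (real \<Rightarrow> real \<Rightarrow> real)
    \<Rightarrow> real \<Rightarrow> real \<Rightarrow> real" where
  "hdens \<alpha> U A \<theta> R =
     (dR U \<theta> R)\<^sup>2 / sqrt (\<alpha> \<theta> R) + sqrt (\<alpha> \<theta> R) * (dth U \<theta> R)\<^sup>2
     + exp (4 * U \<theta> R) / (4 * R\<^sup>2) *
       ((dR A \<theta> R)\<^sup>2 / sqrt (\<alpha> \<theta> R) + sqrt (\<alpha> \<theta> R) * (dth A \<theta> R)\<^sup>2)"

definition energy :: "(real \<Rightarrow> real \<Rightarrow> real) \<Rightarrow> (real \<Rightarrow> real \<Rightarrow> real) \<Rightarrow> (real \<Rightarrow> real \<Rightarrow> real)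
    \<Rightarrow> real \<Rightarrow> real" where
  "energy \<alpha> U A R = integral {0..1} (\<lambda>\<theta>. hdens \<alpha> U A \<theta> R)"

definition modified_energy :: "(real \<Rightarrow> real \<Rightarrow> real) \<Rightarrow> (real \<Rightarrow> real \<Rightarrow> real)
    \<Rightarrow> (real \<Rightarrow> real \<Rightarrow> real) \<Rightarrow> (real \<Rightarrow> real \<Rightarrow> real) \<Rightarrow> real \<Rightarrow> real \<Rightarrow> real" where
  "modified_energy \<alpha> \<beta> U A K R =
     energy \<alpha> U A R
     + integral {0..1} (\<lambda>\<theta>. exp (2 * \<beta> \<theta> R) * K\<^sup>2 / (4 * sqrt (\<alpha> \<theta> R) * R ^ 4))"

text \<open>The vacuum T^2-symmetric Einstein equations in areal coordinates, with
  beta = nu + ln(alpha)/2, on the strip S^1 x (Rs,Ri].\<close>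

definition T2_vacuum :: "real \<Rightarrow> real \<Rightarrow> real \<Rightarrow> (real \<Rightarrow> real \<Rightarrow> real) \<Rightarrow> (real \<Rightarrow> real \<Rightarrow> real)
    \<Rightarrow> (real \<Rightarrow> real \<Rightarrow> real) \<Rightarrow> (real \<Rightarrow> real \<Rightarrow> real) \<Rightarrow> (real \<Rightarrow> real \<Rightarrow> real)
    \<Rightarrow> (real \<Rightarrow> real \<Rightarrow> real) \<Rightarrow> (real \<Rightarrow> real \<Rightarrow> real) \<Rightarrow> bool" where
  "T2_vacuum Rs Ri K \<alpha> \<nu> \<beta> U A G H \<longleftrightarrow>
     0 < Rs \<and> Rs < Ri \<and> 0 \<le> K \<and>
     smooth_periodic Rs Ri \<alpha> \<and> smooth_periodic Rs Ri \<nu> \<and> smooth_periodic Rs Ri U \<and>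
     smooth_periodic Rs Ri A \<and> smooth_periodic Rs Ri G \<and> smooth_periodic Rs Ri H \<and>
     (\<forall>\<theta> R. R \<in> {Rs<..Ri} \<longrightarrow>
        0 < \<alpha> \<theta> R \<and>
        \<beta> \<theta> R = \<nu> \<theta> R + ln (\<alpha> \<theta> R) / 2 \<and>
        dR \<beta> \<theta> R = sqrt (\<alpha> \<theta> R) * R * hdens \<alpha> U A \<theta> R
                      - exp (2 * \<beta> \<theta> R) * K\<^sup>2 / (4 * R ^ 3) \<and>
        dth \<beta> \<theta> R = 2 * R * (dR U \<theta> R * dth U \<theta> R
                      + exp (4 * U \<theta> R) / (4 * R\<^sup>2) * dR A \<theta> R * dth A \<theta> R) \<and>
        dR \<alpha> \<theta> R = - \<alpha> \<theta> R * exp (2 * \<beta> \<theta> R) * K\<^sup>2 / R ^ 3 \<and>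
        dR (dR U) \<theta> R - \<alpha> \<theta> R * dth (dth U) \<theta> R =
          - dR U \<theta> R / R + dR \<alpha> \<theta> R * dR U \<theta> R / (2 * \<alpha> \<theta> R)
          + dth \<alpha> \<theta> R * dth U \<theta> R / 2
          + exp (4 * U \<theta> R) / (2 * R\<^sup>2) * ((dR A \<theta> R)\<^sup>2 - \<alpha> \<theta> R * (dth A \<theta> R)\<^sup>2) \<and>
        dR (dR A) \<theta> R - \<alpha> \<theta> R * dth (dth A) \<theta> R =
          dR A \<theta> R / R + dR \<alpha> \<theta> R * dR A \<theta> R / (2 * \<alpha> \<theta> R)
          + dth \<alpha> \<theta> R * dth A \<theta> R / 2
          - 4 * dR A \<theta> R * dR U \<theta> R + 4 * \<alpha> \<theta> R * dth A \<theta> R * dth U \<theta> R \<and>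
        dR G \<theta> R = - A \<theta> R * dR H \<theta> R \<and>
        dR H \<theta> R = exp (2 * \<beta> \<theta> R) * K / (sqrt (\<alpha> \<theta> R) * R ^ 3))"

end

theory Submission
  imports Defs
begin

(* The modified energy density F = h + e^(2 beta) K^2 / (4 sqrt alpha R^4) satisfies, by the field
   equations, the conservation law  dF/dR = dD/dtheta - Q  with the flux
   D = 2 sqrt alpha U_theta U_R + e^(4U) / (2 R^2) sqrt alpha A_theta A_R  and the manifestly
   nonnegative dissipation Q, the integrand of the claimed derivative. Integrating over the circle,
   the flux term drops out by periodicity, so the modified energy has derivative -(integral of Q).
   Pointwise Q <= (4/R) F, hence (R^4 E~)' >= 0, which gives the growth bound. *)

section \<open>Smooth functions of two variables\<close>

lemma smooth_on2_dth: "smooth_on2 S f \<Longrightarrow> smooth_on2 S (dth f)"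
  unfolding smooth_on2_def by (metis Ck.simps(2))

lemma smooth_on2_dR: "smooth_on2 S f \<Longrightarrow> smooth_on2 S (dR f)"
  unfolding smooth_on2_def by (metis Ck.simps(2))

lemma smooth_on2_continuous_on_compose:
  assumes "smooth_on2 S f" "continuous_on T h1" "continuous_on T h2" "\<And>x. x \<in> T \<Longrightarrow> (h1 x, h2 x) \<in> S"
  shows "continuous_on T (\<lambda>x. f (h1 x) (h2 x))"
proof -
  have "continuous_on S (\<lambda>p. f (fst p) (snd p))"
    using assms(1) unfolding smooth_on2_def by (metis Ck.simps(1))
  from continuous_on_compose2[OF this continuous_on_Pair[OF assms(2,3)]] assms(4)
  show ?thesis by auto
qed

lemma smooth_on2_has_derivative_dth:
  assumes "smooth_on2 S f" "(t, r) \<in> S"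
  shows "((\<lambda>t. f t r) has_real_derivative dth f t r) (at t)"
proof -
  have "Ck 1 S f" using assms(1) unfolding smooth_on2_def by blast
  with assms(2) show ?thesis
    unfolding dth_def by (auto simp: DERIV_deriv_iff_real_differentiable)
qed

lemma smooth_on2_has_derivative_dR:
  assumes "smooth_on2 S f" "(t, r) \<in> S"
  shows "((\<lambda>r. f t r) has_real_derivative dR f t r) (at r)"
proof -
  have "Ck 1 S f" using assms(1) unfolding smooth_on2_def by blast
  with assms(2) show ?thesis
    unfolding dR_def by (auto simp: DERIV_deriv_iff_real_differentiable)
qed

lemma integral_dR_dth:
  assumes g: "smooth_on2 S g" and box: "{a..t} \<times> {c..d} \<subseteq> S" and "a \<le> t" and r: "r \<in> {c<..<d}"
  shows "integral {a..t} (\<lambda>s. dR (dth g) s r) = dR g t r - dR g a r"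
proof -
  have in_S: "(s, x) \<in> S" if "s \<in> {a..t}" "x \<in> {c..d}" for s x
    using box that by blast
  have ftc: "integral {a..t} (\<lambda>s. dth g s x) = g t x - g a x" if x: "x \<in> {c..d}" for x
    by (rule integral_unique, rule fundamental_theorem_of_calculus[OF \<open>a \<le> t\<close>])
       (auto intro!: has_field_derivative_at_within smooth_on2_has_derivative_dth[OF g] in_S x
             simp: has_real_derivative_iff_has_vector_derivative[symmetric])
  have "((\<lambda>x. integral (cbox a t) (\<lambda>s. dth g s x)) has_field_derivative
          integral (cbox a t) (\<lambda>s. dR (dth g) s r)) (at r within {c..d})"
  proof (rule leibniz_rule_field_derivative)
    fix x s assume "x \<in> {c..d}" "s \<in> cbox a t"
    then show "((\<lambda>x. dth g s x) has_field_derivative dR (dth g) s x) (at x within {c..d})"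
      by (intro has_field_derivative_at_within[OF smooth_on2_has_derivative_dR[OF smooth_on2_dth[OF g]]] in_S) auto
  next
    fix x assume "x \<in> {c..d}"
    then show "(\<lambda>s. dth g s x) integrable_on cbox a t"
      unfolding box_real
      by (intro integrable_continuous_interval)
         (rule smooth_on2_continuous_on_compose[OF smooth_on2_dth[OF g] continuous_on_id continuous_on_const];
          auto intro: in_S)
  next
    show "continuous_on ({c..d} \<times> cbox a t) (\<lambda>(x, s). dR (dth g) s x)"
      unfolding case_prod_beta box_real
      by (rule smooth_on2_continuous_on_compose[OF smooth_on2_dR[OF smooth_on2_dth[OF g]]
                 continuous_on_snd[OF continuous_on_id] continuous_on_fst[OF continuous_on_id]];
          auto intro: in_S)
  qed (use r in auto)
  then have "((\<lambda>x. integral {a..t} (\<lambda>s. dth g s x)) has_real_derivative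
               integral {a..t} (\<lambda>s. dR (dth g) s r)) (at r)"
    using r by (subst (asm) at_within_interior) (auto simp: box_real)
  then have "((\<lambda>x. g t x - g a x) has_real_derivative integral {a..t} (\<lambda>s. dR (dth g) s r)) (at r)"
    by (rule has_field_derivative_transform_within_open[of _ _ _ "{c<..<d}"]) (use r ftc in auto)
  moreover have "((\<lambda>x. g t x - g a x) has_real_derivative dR g t r - dR g a r) (at r)"
    using r \<open>a \<le> t\<close>
    by (intro DERIV_diff smooth_on2_has_derivative_dR[OF g] in_S) auto
  ultimately show ?thesis by (rule DERIV_unique)
qed

lemma smooth_on2_dR_dth_commute:
  assumes "open S" and g: "smooth_on2 S g" and "(t0, r0) \<in> S"
  shows "dR (dth g) t0 r0 = dth (dR g) t0 r0"
proof -
  obtain T Q where "open T" "open Q" "(t0, r0) \<in> T \<times> Q" "T \<times> Q \<subseteq> S"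
    by (rule open_prod_elim[OF assms(1,3)])
  moreover obtain e where "0 < e" "cball t0 e \<subseteq> T"
    using \<open>open T\<close> \<open>(t0, r0) \<in> T \<times> Q\<close> open_contains_cball by blast
  moreover obtain d where "0 < d" "cball r0 d \<subseteq> Q"
    using \<open>open Q\<close> \<open>(t0, r0) \<in> T \<times> Q\<close> open_contains_cball by blast
  ultimately have box: "{t0 - e..t0 + e} \<times> {r0 - d..r0 + d} \<subseteq> S"
    by (metis cball_eq_atLeastAtMost Sigma_mono subset_trans)
  define I where "I t = integral {t0 - e..t} (\<lambda>s. dR (dth g) s r0)" for t
  have I_eq: "I t = dR g t r0 - dR g (t0 - e) r0" if "t \<in> {t0 - e..t0 + e}" for t
  proof -
    have "{t0 - e..t} \<times> {r0 - d..r0 + d} \<subseteq> S"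
      by (rule order_trans[OF _ box]) (use that in auto)
    then show ?thesis
      unfolding I_def by (rule integral_dR_dth[OF g]) (use that \<open>0 < d\<close> in auto)
  qed
  have "continuous_on {t0 - e..t0 + e} (\<lambda>s. dR (dth g) s r0)"
    by (rule smooth_on2_continuous_on_compose[OF smooth_on2_dR[OF smooth_on2_dth[OF g]]
          continuous_on_id continuous_on_const], rule subsetD[OF box]) (use \<open>0 < d\<close> in auto)
  moreover have t0: "t0 \<in> {t0 - e..t0 + e}" "t0 \<in> interior {t0 - e..t0 + e}"
    using \<open>0 < e\<close> by auto
  ultimately have "(I has_real_derivative dR (dth g) t0 r0) (at t0)"
    unfolding I_def using integral_has_real_derivative at_within_interior by metis
  then have "((\<lambda>t. dR g t r0 - dR g (t0 - e) r0) has_real_derivative dR (dth g) t0 r0) (at t0)"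
    by (rule has_field_derivative_transform_within_open[of _ _ _ "{t0 - e<..<t0 + e}"])
       (use \<open>0 < e\<close> I_eq in auto)
  moreover have "((\<lambda>t. dR g t r0 - dR g (t0 - e) r0) has_real_derivative dth (dR g) t0 r0 - 0) (at t0)"
    by (rule DERIV_diff[OF smooth_on2_has_derivative_dth[OF smooth_on2_dR[OF g] assms(3)] DERIV_const])
  ultimately show ?thesis by (simp add: DERIV_unique)
qed

lemma smooth_periodicE:
  assumes "smooth_periodic Rs Ri f"
  obtains W where "open W" "UNIV \<times> {Rs<..Ri} \<subseteq> W" "smooth_on2 W f"
  using assms unfolding smooth_periodic_def by blast

lemma smooth_periodic_periodic:
  "smooth_periodic Rs Ri f \<Longrightarrow> R \<in> {Rs<..Ri} \<Longrightarrow> f (\<theta> + 1) R = f \<theta> R"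
  unfolding smooth_periodic_def by blast

lemma smooth_periodic_has_derivative_dth:
  assumes "smooth_periodic Rs Ri f" "R \<in> {Rs<..Ri}"
  shows "((\<lambda>t. f t R) has_real_derivative dth f \<theta> R) (at \<theta>)"
proof -
  obtain W where W: "UNIV \<times> {Rs<..Ri} \<subseteq> W" "smooth_on2 W f"
    using assms(1) by (rule smooth_periodicE)
  have "(\<theta>, R) \<in> W" using W(1) assms(2) by blast
  then show ?thesis by (rule smooth_on2_has_derivative_dth[OF W(2)])
qed

lemma smooth_periodic_has_derivative_dR:
  assumes "smooth_periodic Rs Ri f" "R \<in> {Rs<..Ri}"
  shows "((\<lambda>r. f \<theta> r) has_real_derivative dR f \<theta> R) (at R)"
proof -
  obtain W where W: "UNIV \<times> {Rs<..Ri} \<subseteq> W" "smooth_on2 W f"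
    using assms(1) by (rule smooth_periodicE)
  have "(\<theta>, R) \<in> W" using W(1) assms(2) by blast
  then show ?thesis by (rule smooth_on2_has_derivative_dR[OF W(2)])
qed

lemma smooth_periodic_continuous_on_compose:
  assumes "smooth_periodic Rs Ri f" "continuous_on T h1" "continuous_on T h2"
    "\<And>x. x \<in> T \<Longrightarrow> h2 x \<in> {Rs<..Ri}"
  shows "continuous_on T (\<lambda>x. f (h1 x) (h2 x))"
proof -
  obtain W where W: "UNIV \<times> {Rs<..Ri} \<subseteq> W" "smooth_on2 W f"
    using assms(1) by (rule smooth_periodicE)
  have "(h1 x, h2 x) \<in> W" if "x \<in> T" for x using W(1) assms(4)[OF that] by blast
  then show ?thesis by (rule smooth_on2_continuous_on_compose[OF W(2) assms(2,3)])
qed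

lemma smooth_periodic_dR_dth_commute:
  assumes "smooth_periodic Rs Ri f" "R \<in> {Rs<..Ri}"
  shows "dR (dth f) \<theta> R = dth (dR f) \<theta> R"
proof -
  obtain W where W: "open W" "UNIV \<times> {Rs<..Ri} \<subseteq> W" "smooth_on2 W f"
    using assms(1) by (rule smooth_periodicE)
  have "(\<theta>, R) \<in> W" using W(2) assms(2) by blast
  then show ?thesis by (rule smooth_on2_dR_dth_commute[OF W(1,3)])
qed

lemma smooth_periodic_dth:
  assumes f: "smooth_periodic Rs Ri f"
  shows "smooth_periodic Rs Ri (dth f)"
  unfolding smooth_periodic_def
proof (intro conjI allI impI)
  show "\<exists>W. open W \<and> UNIV \<times> {Rs<..Ri} \<subseteq> W \<and> smooth_on2 W (dth f)"
    using f by (elim smooth_periodicE) (blast intro: smooth_on2_dth)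
  fix \<theta> R assume R: "R \<in> {Rs<..Ri}"
  have "((\<lambda>t. f (t + 1) R) has_real_derivative dth f (\<theta> + 1) R) (at \<theta>)"
    using smooth_periodic_has_derivative_dth[OF f R, of "\<theta> + 1"] DERIV_shift[of "\<lambda>t. f t R"] by simp
  then have "((\<lambda>t. f t R) has_real_derivative dth f (\<theta> + 1) R) (at \<theta>)"
    by (simp add: smooth_periodic_periodic[OF f R])
  then show "dth f (\<theta> + 1) R = dth f \<theta> R"
    using smooth_periodic_has_derivative_dth[OF f R] by (rule DERIV_unique)
qed

lemma smooth_periodic_dR:
  assumes f: "smooth_periodic Rs Ri f"
  shows "smooth_periodic Rs Ri (dR f)"
  unfolding smooth_periodic_def
proof (intro conjI allI impI)
  show "\<exists>W. open W \<and> UNIV \<times> {Rs<..Ri} \<subseteq> W \<and> smooth_on2 W (dR f)"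
    using f by (elim smooth_periodicE) (blast intro: smooth_on2_dR)
  fix \<theta> R assume R: "R \<in> {Rs<..Ri}"
  note deriv_within = has_field_derivative_at_within[OF smooth_periodic_has_derivative_dR[OF f R]]
  have shifted: "((\<lambda>r. f \<theta> r) has_real_derivative dR f (\<theta> + 1) R) (at R within {Rs<..Ri})"
    by (rule has_field_derivative_transform_within[OF deriv_within zero_less_one R])
       (simp add: smooth_periodic_periodic[OF f])
  have "at R within {Rs<..Ri} \<noteq> bot"
    using R by (simp add: trivial_limit_within)
  then show "dR f (\<theta> + 1) R = dR f \<theta> R"
    by (rule has_field_derivative_unique[OF shifted deriv_within])
qed

section \<open>One-variable calculus and pointwise algebra\<close>

lemma continuous_on_Ioc_eq_at_endpoint:
  fixes f g :: "real \<Rightarrow> real"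
  assumes "a < b" "continuous_on {a<..b} f" "continuous_on {a<..b} g"
    and eq: "\<And>x. a < x \<Longrightarrow> x < b \<Longrightarrow> f x = g x"
  shows "f b = g b"
proof -
  define c where "c = (a + b) / 2"
  have "a < c" "c < b" using \<open>a < b\<close> by (auto simp: c_def)
  then have "continuous_on (closure {c<..<b}) (\<lambda>x. f x - g x)"
    by (auto intro!: continuous_intros
        intro: continuous_on_subset[OF assms(2)] continuous_on_subset[OF assms(3)])
  then have "f b - g b = 0"
    by (rule continuous_constant_on_closure) (use \<open>a < c\<close> \<open>c < b\<close> eq in auto)
  then show ?thesis by simp
qed

lemma DERIV_real_sqrt_comp:
  assumes "(a has_real_derivative a') (at x within X)" "0 < a x"
  shows "((\<lambda>r. sqrt (a r)) has_real_derivative a' / (2 * sqrt (a x))) (at x within X)"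
  using DERIV_chain2[OF DERIV_real_sqrt assms(1)] assms(2) by (simp add: field_simps)

lemma DERIV_kinetic_term:
  assumes a: "(a has_real_derivative a') (at x within X)" and "0 < a x"
    and p: "(p has_real_derivative p') (at x within X)" and q: "(q has_real_derivative q') (at x within X)"
  shows "((\<lambda>r. (p r)\<^sup>2 / sqrt (a r) + sqrt (a r) * (q r)\<^sup>2) has_real_derivative
           2 * p x * p' / sqrt (a x) - (p x)\<^sup>2 * a' / (2 * sqrt (a x) ^ 3)
           + a' * (q x)\<^sup>2 / (2 * sqrt (a x)) + 2 * sqrt (a x) * q x * q') (at x within X)"
proof -
  note s = DERIV_real_sqrt_comp[OF a \<open>0 < a x\<close>]
  have "sqrt (a x) \<noteq> 0" using \<open>0 < a x\<close> by simp
  from DERIV_add[OF DERIV_divide[OF DERIV_power[OF p, of 2] s this] DERIV_mult[OF s DERIV_power[OF q, of 2]]]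
  show ?thesis
    using \<open>0 < a x\<close> by (elim DERIV_cong) (simp add: field_simps power2_eq_square eval_nat_numeral)
qed

(* Along a line theta = const, a u p q v w b stand for alpha, U, U_R, U_theta, A_R, A_theta, beta;
   in DERIV_energy_flux the same letters are used along R = const. *)
lemma DERIV_modified_density:
  fixes a u p q v w b :: "real \<Rightarrow> real"
  assumes a: "(a has_real_derivative a') (at x within X)" and u: "(u has_real_derivative u') (at x within X)"
    and p: "(p has_real_derivative p') (at x within X)" and q: "(q has_real_derivative q') (at x within X)"
    and v: "(v has_real_derivative v') (at x within X)" and w: "(w has_real_derivative w') (at x within X)"
    and b: "(b has_real_derivative b') (at x within X)"
    and pos: "0 < a x" "0 < x"
  shows "((\<lambda>r. (p r)\<^sup>2 / sqrt (a r) + sqrt (a r) * (q r)\<^sup>2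
            + exp (4 * u r) / (4 * r\<^sup>2) * ((v r)\<^sup>2 / sqrt (a r) + sqrt (a r) * (w r)\<^sup>2)
            + exp (2 * b r) * K\<^sup>2 / (4 * sqrt (a r) * r ^ 4)) has_real_derivative
      (2 * p x * p' / sqrt (a x) - (p x)\<^sup>2 * a' / (2 * sqrt (a x) ^ 3) + a' * (q x)\<^sup>2 / (2 * sqrt (a x))
         + 2 * sqrt (a x) * q x * q')
      + exp (4 * u x) / (4 * x\<^sup>2) * (4 * u' - 2 / x) * ((v x)\<^sup>2 / sqrt (a x) + sqrt (a x) * (w x)\<^sup>2)
      + exp (4 * u x) / (4 * x\<^sup>2) * (2 * v x * v' / sqrt (a x) - (v x)\<^sup>2 * a' / (2 * sqrt (a x) ^ 3)
         + a' * (w x)\<^sup>2 / (2 * sqrt (a x)) + 2 * sqrt (a x) * w x * w')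
      + exp (2 * b x) * K\<^sup>2 / 4 * (2 * b' / (sqrt (a x) * x ^ 4) - a' / (2 * sqrt (a x) ^ 3 * x ^ 4)
         - 4 / (sqrt (a x) * x ^ 5))) (at x within X)"
proof -
  note s = DERIV_real_sqrt_comp[OF a pos(1)]
  have nz: "4 * x\<^sup>2 \<noteq> 0" "4 * sqrt (a x) * x ^ 4 \<noteq> 0" using pos by auto
  have weight: "((\<lambda>r. exp (4 * u r) / (4 * r\<^sup>2)) has_real_derivative
                  exp (4 * u x) / (4 * x\<^sup>2) * (4 * u' - 2 / x)) (at x within X)"
    using DERIV_divide[OF DERIV_chain2[OF DERIV_exp DERIV_cmult[OF u, of 4]]
                          DERIV_cmult[OF DERIV_pow[of 2 x X], of 4] nz(1)] pos
    by (elim DERIV_cong) (simp add: field_simps power2_eq_square)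
  have twist: "((\<lambda>r. exp (2 * b r) * K\<^sup>2 / (4 * sqrt (a r) * r ^ 4)) has_real_derivative
      exp (2 * b x) * K\<^sup>2 / 4 * (2 * b' / (sqrt (a x) * x ^ 4) - a' / (2 * sqrt (a x) ^ 3 * x ^ 4)
         - 4 / (sqrt (a x) * x ^ 5))) (at x within X)"
    using DERIV_divide[OF DERIV_cmult_right[OF DERIV_chain2[OF DERIV_exp DERIV_cmult[OF b, of 2]], of "K\<^sup>2"]
                        DERIV_mult[OF DERIV_cmult[OF s, of 4] DERIV_pow[of 4 x X]] nz(2)] pos
    by (elim DERIV_cong) (simp add: field_simps eval_nat_numeral)
  show ?thesis
    using DERIV_add[OF DERIV_add[OF DERIV_kinetic_term[OF a pos(1) p q]
            DERIV_mult[OF weight DERIV_kinetic_term[OF a pos(1) v w]]] twist]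
    by (elim DERIV_cong) (simp add: algebra_simps)
qed

lemma DERIV_energy_flux:
  fixes a u p q v w :: "real \<Rightarrow> real"
  assumes a: "(a has_real_derivative a') (at t)" and u: "(u has_real_derivative u') (at t)"
    and p: "(p has_real_derivative p') (at t)" and q: "(q has_real_derivative q') (at t)"
    and v: "(v has_real_derivative v') (at t)" and w: "(w has_real_derivative w') (at t)"
    and pos: "0 < a t"
  shows "((\<lambda>t. 2 * sqrt (a t) * q t * p t + exp (4 * u t) / (2 * R\<^sup>2) * sqrt (a t) * w t * v t)
           has_real_derivative
           (a' * q t * p t / sqrt (a t) + 2 * sqrt (a t) * q' * p t + 2 * sqrt (a t) * q t * p')
           + exp (4 * u t) / (2 * R\<^sup>2) * (4 * u' * sqrt (a t) * w t * v t
              + a' * w t * v t / (2 * sqrt (a t)) + sqrt (a t) * w' * v t + sqrt (a t) * w t * v')) (at t)"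
proof -
  note s = DERIV_real_sqrt_comp[OF a pos]
  have weight: "((\<lambda>t. exp (4 * u t) / (2 * R\<^sup>2)) has_real_derivative exp (4 * u t) * (4 * u') / (2 * R\<^sup>2)) (at t)"
    by (rule DERIV_cdivide[OF DERIV_chain2[OF DERIV_exp DERIV_cmult[OF u]]])
  show ?thesis
    using DERIV_add[OF DERIV_mult[OF DERIV_mult[OF DERIV_cmult[OF s, of 2] q] p]
                       DERIV_mult[OF DERIV_mult[OF DERIV_mult[OF weight s] w] v]] pos
    by (elim DERIV_cong) (cases "R = 0"; simp add: field_simps)
qed

(* Left: the R-derivative of the modified density in the shape of DERIV_modified_density;
   right: the theta-derivative of the flux in the shape of DERIV_energy_flux, minus the dissipation. *)
lemma conservation_identity:
  fixes al r K B E h uR uT uRR uTT uRT aR aT aRR aTT aRT alR alT bR :: real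
  assumes "0 < al" "0 < r"
    and h: "h = uR\<^sup>2 / sqrt al + sqrt al * uT\<^sup>2 + E / (4 * r\<^sup>2) * (aR\<^sup>2 / sqrt al + sqrt al * aT\<^sup>2)"
    and bR: "bR = sqrt al * r * h - B * K\<^sup>2 / (4 * r ^ 3)"
    and alR: "alR = - al * B * K\<^sup>2 / r ^ 3"
    and uRR: "uRR - al * uTT = - uR / r + alR * uR / (2 * al) + alT * uT / 2
                + E / (2 * r\<^sup>2) * (aR\<^sup>2 - al * aT\<^sup>2)"
    and aRR: "aRR - al * aTT = aR / r + alR * aR / (2 * al) + alT * aT / 2
                - 4 * aR * uR + 4 * al * aT * uT"
  shows "(2 * uR * uRR / sqrt al - uR\<^sup>2 * alR / (2 * sqrt al ^ 3) + alR * uT\<^sup>2 / (2 * sqrt al)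
           + 2 * sqrt al * uT * uRT)
       + E / (4 * r\<^sup>2) * (4 * uR - 2 / r) * (aR\<^sup>2 / sqrt al + sqrt al * aT\<^sup>2)
       + E / (4 * r\<^sup>2) * (2 * aR * aRR / sqrt al - aR\<^sup>2 * alR / (2 * sqrt al ^ 3)
           + alR * aT\<^sup>2 / (2 * sqrt al) + 2 * sqrt al * aT * aRT)
       + B * K\<^sup>2 / 4 * (2 * bR / (sqrt al * r ^ 4) - alR / (2 * sqrt al ^ 3 * r ^ 4)
           - 4 / (sqrt al * r ^ 5))
     = (alT * uT * uR / sqrt al + 2 * sqrt al * uTT * uR + 2 * sqrt al * uT * uRT)
       + E / (2 * r\<^sup>2) * (4 * uT * sqrt al * aT * aR + alT * aT * aR / (2 * sqrt al)
           + sqrt al * aTT * aR + sqrt al * aT * aRT)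
       - (B * K\<^sup>2 / (sqrt al * r ^ 5) + 2 * uR\<^sup>2 / (sqrt al * r)
           + sqrt al * E * aT\<^sup>2 / (2 * r ^ 3))"
proof -
  obtain s where s: "0 < s" "sqrt al = s" "al = s\<^sup>2"
    using \<open>0 < al\<close> by (metis real_sqrt_gt_zero real_sqrt_pow2 less_imp_le)
  have uRR': "uRR = al * uTT - uR / r + alR * uR / (2 * al) + alT * uT / 2
                + E / (2 * r\<^sup>2) * (aR\<^sup>2 - al * aT\<^sup>2)" using uRR by linarith
  have aRR': "aRR = al * aTT + aR / r + alR * aR / (2 * al) + alT * aT / 2
                - 4 * aR * uR + 4 * al * aT * uT" using aRR by linarith
  show ?thesis
    unfolding uRR' aRR' bR h alR s(2) unfolding s(3) using s(1) \<open>0 < r\<close>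
    by (simp add: field_simps power2_eq_square eval_nat_numeral)
qed

lemma energy_dissipation_bounds:
  fixes al r K B E uR uT aR aT :: real
  assumes "0 < al" "0 < r" "0 < E" "0 < B"
  defines "D \<equiv> B * K\<^sup>2 / (sqrt al * r ^ 5) + 2 * uR\<^sup>2 / (sqrt al * r) + sqrt al * E * aT\<^sup>2 / (2 * r ^ 3)"
  shows "0 \<le> D"
    and "D \<le> 4 / r * (uR\<^sup>2 / sqrt al + sqrt al * uT\<^sup>2 + E / (4 * r\<^sup>2) * (aR\<^sup>2 / sqrt al + sqrt al * aT\<^sup>2)
                       + B * K\<^sup>2 / (4 * sqrt al * r ^ 4))"
proof -
  show "0 \<le> D" unfolding D_def using assms by (intro add_nonneg_nonneg) auto
  obtain s where s: "0 < s" "sqrt al = s" "al = s\<^sup>2"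
    using \<open>0 < al\<close> by (metis real_sqrt_gt_zero real_sqrt_pow2 less_imp_le)
  have "4 / r * (uR\<^sup>2 / sqrt al + sqrt al * uT\<^sup>2 + E / (4 * r\<^sup>2) * (aR\<^sup>2 / sqrt al + sqrt al * aT\<^sup>2)
                       + B * K\<^sup>2 / (4 * sqrt al * r ^ 4)) - D
      = 2 * uR\<^sup>2 / (sqrt al * r) + 4 * sqrt al * uT\<^sup>2 / r + E * aR\<^sup>2 / (sqrt al * r ^ 3)
        + sqrt al * E * aT\<^sup>2 / (2 * r ^ 3)"
    unfolding D_def s(2) unfolding s(3) using s(1) \<open>0 < r\<close> by (simp add: field_simps eval_nat_numeral)
  also have "\<dots> \<ge> 0" using assms by (intro add_nonneg_nonneg) auto
  finally show "D \<le> 4 / r * (uR\<^sup>2 / sqrt al + sqrt al * uT\<^sup>2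
      + E / (4 * r\<^sup>2) * (aR\<^sup>2 / sqrt al + sqrt al * aT\<^sup>2) + B * K\<^sup>2 / (4 * sqrt al * r ^ 4))"
    by simp
qed

lemma power_weighted_growth_bound:
  fixes E E' :: "real \<Rightarrow> real" and a b k :: real and n :: nat
  assumes deriv: "\<And>x. x \<in> {a<..b} \<Longrightarrow> (E has_real_derivative E' x) (at x within {a<..b})"
    and growth: "\<And>x. x \<in> {a<..b} \<Longrightarrow> - (n / x * E x) \<le> E' x"
    and "0 \<le> a" and k: "k \<in> {a<..b}"
  shows "E k \<le> E b * (b / k) ^ n"
proof -
  define G where "G x = x ^ n * E x" for x
  have G': "(G has_real_derivative n * x ^ (n - 1) * E x + x ^ n * E' x) (at x within {a<..b})"
    if "x \<in> {a<..b}" for x :: real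
    unfolding G_def using DERIV_mult[OF DERIV_pow deriv[OF that]] by (simp add: algebra_simps)
  have G'_nonneg: "0 \<le> n * x ^ (n - 1) * E x + x ^ n * E' x" if "x \<in> {a<..b}" for x :: real
  proof -
    have "0 < x" using that \<open>0 \<le> a\<close> by simp
    then have "x ^ n * (n / x * E x) = n * x ^ (n - 1) * E x"
      by (cases n) (simp_all add: field_simps)
    moreover have "x ^ n * (- (n / x * E x)) \<le> x ^ n * E' x"
      using mult_left_mono[OF growth[OF that], of "x ^ n"] \<open>0 < x\<close> by simp
    ultimately show ?thesis by simp
  qed
  have "G k \<le> G b"
  proof (rule DERIV_nonneg_imp_increasing_open[of k b G])
    show "k \<le> b" using k by simp
    show "continuous_on {k..b} G"
      using k by (intro DERIV_continuous_on[of _ G]) (auto intro: DERIV_subset[OF G'])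
    fix x assume "k < x" "x < b"
    then have "x \<in> interior {a<..b}" "x \<in> {a<..b}" using k by auto
    then show "\<exists>y. (G has_real_derivative y) (at x) \<and> 0 \<le> y"
      using G' G'_nonneg at_within_interior by metis
  qed
  then show ?thesis
    using k \<open>0 \<le> a\<close> by (simp add: G_def field_simps power_divide)
qed

section \<open>The energy estimate for a vacuum solution\<close>

definition modified_density ::
    "(real \<Rightarrow> real \<Rightarrow> real) \<Rightarrow> (real \<Rightarrow> real \<Rightarrow> real) \<Rightarrow> (real \<Rightarrow> real \<Rightarrow> real)
      \<Rightarrow> (real \<Rightarrow> real \<Rightarrow> real) \<Rightarrow> real \<Rightarrow> real \<Rightarrow> real \<Rightarrow> real" where
  "modified_density \<alpha> \<beta> U A K \<theta> R =
     hdens \<alpha> U A \<theta> R + exp (2 * \<beta> \<theta> R) * K\<^sup>2 / (4 * sqrt (\<alpha> \<theta> R) * R ^ 4)"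

definition energy_flux ::
    "(real \<Rightarrow> real \<Rightarrow> real) \<Rightarrow> (real \<Rightarrow> real \<Rightarrow> real) \<Rightarrow> (real \<Rightarrow> real \<Rightarrow> real) \<Rightarrow> real \<Rightarrow> real \<Rightarrow> real" where
  "energy_flux \<alpha> U A \<theta> R =
     2 * sqrt (\<alpha> \<theta> R) * dth U \<theta> R * dR U \<theta> R
     + exp (4 * U \<theta> R) / (2 * R\<^sup>2) * sqrt (\<alpha> \<theta> R) * dth A \<theta> R * dR A \<theta> R"

definition energy_dissipation ::
    "(real \<Rightarrow> real \<Rightarrow> real) \<Rightarrow> (real \<Rightarrow> real \<Rightarrow> real) \<Rightarrow> (real \<Rightarrow> real \<Rightarrow> real)
      \<Rightarrow> (real \<Rightarrow> real \<Rightarrow> real) \<Rightarrow> real \<Rightarrow> real \<Rightarrow> real \<Rightarrow> real" where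
  "energy_dissipation \<alpha> \<beta> U A K \<theta> R =
     exp (2 * \<beta> \<theta> R) * K\<^sup>2 / (sqrt (\<alpha> \<theta> R) * R ^ 5) + 2 * (dR U \<theta> R)\<^sup>2 / (sqrt (\<alpha> \<theta> R) * R)
     + sqrt (\<alpha> \<theta> R) * exp (4 * U \<theta> R) * (dth A \<theta> R)\<^sup>2 / (2 * R ^ 3)"

locale T2_vacuum_solution =
  fixes Rs Ri K :: real and \<alpha> \<nu> \<beta> U A G H :: "real \<Rightarrow> real \<Rightarrow> real"
  assumes vacuum: "T2_vacuum Rs Ri K \<alpha> \<nu> \<beta> U A G H"
begin

lemma Rs_pos: "0 < Rs" and Rs_less_Ri: "Rs < Ri"
  and smooth_alpha: "smooth_periodic Rs Ri \<alpha>" and smooth_nu: "smooth_periodic Rs Ri \<nu>"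
  and smooth_U: "smooth_periodic Rs Ri U" and smooth_A: "smooth_periodic Rs Ri A"
  using vacuum unfolding T2_vacuum_def by auto

lemma R_pos: "R \<in> {Rs<..Ri} \<Longrightarrow> 0 < R"
  using Rs_pos by simp

lemma
  assumes "R \<in> {Rs<..Ri}"
  shows alpha_pos: "0 < \<alpha> \<theta> R"
    and beta_eq: "\<beta> \<theta> R = \<nu> \<theta> R + ln (\<alpha> \<theta> R) / 2"
    and dR_beta_eq: "dR \<beta> \<theta> R = sqrt (\<alpha> \<theta> R) * R * hdens \<alpha> U A \<theta> R
                                  - exp (2 * \<beta> \<theta> R) * K\<^sup>2 / (4 * R ^ 3)"
    and dR_alpha_eq: "dR \<alpha> \<theta> R = - \<alpha> \<theta> R * exp (2 * \<beta> \<theta> R) * K\<^sup>2 / R ^ 3"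
    and wave_U: "dR (dR U) \<theta> R - \<alpha> \<theta> R * dth (dth U) \<theta> R =
          - dR U \<theta> R / R + dR \<alpha> \<theta> R * dR U \<theta> R / (2 * \<alpha> \<theta> R)
          + dth \<alpha> \<theta> R * dth U \<theta> R / 2
          + exp (4 * U \<theta> R) / (2 * R\<^sup>2) * ((dR A \<theta> R)\<^sup>2 - \<alpha> \<theta> R * (dth A \<theta> R)\<^sup>2)"
    and wave_A: "dR (dR A) \<theta> R - \<alpha> \<theta> R * dth (dth A) \<theta> R =
          dR A \<theta> R / R + dR \<alpha> \<theta> R * dR A \<theta> R / (2 * \<alpha> \<theta> R)
          + dth \<alpha> \<theta> R * dth A \<theta> R / 2
          - 4 * dR A \<theta> R * dR U \<theta> R + 4 * \<alpha> \<theta> R * dth A \<theta> R * dth U \<theta> R"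
  using vacuum assms unfolding T2_vacuum_def by blast+

lemma alpha_nonzero: "R \<in> {Rs<..Ri} \<Longrightarrow> \<alpha> \<theta> R \<noteq> 0"
  and R_nonzero: "R \<in> {Rs<..Ri} \<Longrightarrow> R \<noteq> 0"
  using alpha_pos R_pos by (metis less_irrefl)+

lemmas fields_continuous_on_compose =
  smooth_periodic_continuous_on_compose[OF smooth_alpha]
  smooth_periodic_continuous_on_compose[OF smooth_periodic_dth[OF smooth_alpha]]
  smooth_periodic_continuous_on_compose[OF smooth_periodic_dR[OF smooth_alpha]]
  smooth_periodic_continuous_on_compose[OF smooth_nu]
  smooth_periodic_continuous_on_compose[OF smooth_periodic_dR[OF smooth_nu]]
  smooth_periodic_continuous_on_compose[OF smooth_U]
  smooth_periodic_continuous_on_compose[OF smooth_periodic_dth[OF smooth_U]]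
  smooth_periodic_continuous_on_compose[OF smooth_periodic_dR[OF smooth_U]]
  smooth_periodic_continuous_on_compose[OF smooth_periodic_dth[OF smooth_periodic_dth[OF smooth_U]]]
  smooth_periodic_continuous_on_compose[OF smooth_periodic_dth[OF smooth_periodic_dR[OF smooth_U]]]
  smooth_periodic_continuous_on_compose[OF smooth_A]
  smooth_periodic_continuous_on_compose[OF smooth_periodic_dth[OF smooth_A]]
  smooth_periodic_continuous_on_compose[OF smooth_periodic_dR[OF smooth_A]]
  smooth_periodic_continuous_on_compose[OF smooth_periodic_dth[OF smooth_periodic_dth[OF smooth_A]]]
  smooth_periodic_continuous_on_compose[OF smooth_periodic_dth[OF smooth_periodic_dR[OF smooth_A]]]

lemma beta_continuous_on_compose:
  assumes "continuous_on T h1" "continuous_on T h2" "\<And>x. x \<in> T \<Longrightarrow> h2 x \<in> {Rs<..Ri}"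
  shows "continuous_on T (\<lambda>x. \<beta> (h1 x) (h2 x))"
proof -
  have "continuous_on T (\<lambda>x. \<nu> (h1 x) (h2 x) + ln (\<alpha> (h1 x) (h2 x)) / 2)"
    using assms alpha_pos[OF assms(3)]
    by (intro continuous_intros fields_continuous_on_compose assms(1,2)) (auto simp: less_imp_neq[symmetric])
  then show ?thesis
    by (rule continuous_on_eq) (simp add: beta_eq[OF assms(3)])
qed

lemma beta_has_log_derivative:
  assumes R: "R \<in> {Rs<..Ri}"
  shows "((\<lambda>r. \<beta> \<theta> r) has_real_derivative dR \<nu> \<theta> R + dR \<alpha> \<theta> R / (2 * \<alpha> \<theta> R))
           (at R within {Rs<..Ri})"
proof -
  have "((\<lambda>r. \<nu> \<theta> r + ln (\<alpha> \<theta> r) / 2) has_real_derivative dR \<nu> \<theta> R + dR \<alpha> \<theta> R / (2 * \<alpha> \<theta> R))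
          (at R)"
    using DERIV_add[OF smooth_periodic_has_derivative_dR[OF smooth_nu R, of \<theta>]
            DERIV_cdivide[OF DERIV_chain2[OF DERIV_ln[OF alpha_pos[OF R, of \<theta>]]
              smooth_periodic_has_derivative_dR[OF smooth_alpha R, of \<theta>]], where c = 2]]
    by (elim DERIV_cong) (simp add: field_simps)
  then show ?thesis
    by (rule has_field_derivative_transform_within[OF has_field_derivative_at_within zero_less_one R])
       (simp add: beta_eq)
qed

(* beta = nu + ln alpha / 2 is only known on the half-open strip, so at R = Ri the two-sided
   derivative dR beta is identified by continuity, through the field equation for beta_R. *)
lemma dR_beta_log_derivative:
  assumes R: "R \<in> {Rs<..Ri}"
  shows "dR \<beta> \<theta> R = dR \<nu> \<theta> R + dR \<alpha> \<theta> R / (2 * \<alpha> \<theta> R)"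
proof -
  have interior: "dR \<beta> \<theta> r = dR \<nu> \<theta> r + dR \<alpha> \<theta> r / (2 * \<alpha> \<theta> r)" if "Rs < r" "r < Ri" for r
  proof -
    have "((\<lambda>r. \<beta> \<theta> r) has_real_derivative dR \<nu> \<theta> r + dR \<alpha> \<theta> r / (2 * \<alpha> \<theta> r))
            (at r within {Rs<..<Ri})"
      by (rule DERIV_subset[OF beta_has_log_derivative]) (use that in auto)
    then show ?thesis
      unfolding dR_def using that by (subst (asm) at_within_open) (auto intro: DERIV_imp_deriv)
  qed
  have "dR \<beta> \<theta> Ri = dR \<nu> \<theta> Ri + dR \<alpha> \<theta> Ri / (2 * \<alpha> \<theta> Ri)"
  proof (rule continuous_on_Ioc_eq_at_endpoint[OF Rs_less_Ri])
    have "continuous_on {Rs<..Ri} (\<lambda>r. sqrt (\<alpha> \<theta> r) * r * hdens \<alpha> U A \<theta> r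
                                        - exp (2 * \<beta> \<theta> r) * K\<^sup>2 / (4 * r ^ 3))"
      unfolding hdens_def
      by (intro continuous_intros fields_continuous_on_compose beta_continuous_on_compose)
         (auto simp: alpha_nonzero R_nonzero)
    then show "continuous_on {Rs<..Ri} (\<lambda>r. dR \<beta> \<theta> r)"
      by (rule continuous_on_eq) (simp add: dR_beta_eq)
    show "continuous_on {Rs<..Ri} (\<lambda>r. dR \<nu> \<theta> r + dR \<alpha> \<theta> r / (2 * \<alpha> \<theta> r))"
      by (intro continuous_intros fields_continuous_on_compose) (auto simp: alpha_nonzero)
  qed (rule interior)
  with R interior show ?thesis by (cases "R < Ri") auto
qed

lemma beta_has_derivative:
  "R \<in> {Rs<..Ri} \<Longrightarrow> ((\<lambda>r. \<beta> \<theta> r) has_real_derivative dR \<beta> \<theta> R) (at R within {Rs<..Ri})"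
  using beta_has_log_derivative dR_beta_log_derivative by simp

lemma energy_flux_dth:
  assumes R: "R \<in> {Rs<..Ri}"
  shows "((\<lambda>t. energy_flux \<alpha> U A t R) has_real_derivative dth (energy_flux \<alpha> U A) \<theta> R) (at \<theta>)"
    and "dth (energy_flux \<alpha> U A) \<theta> R =
           (dth \<alpha> \<theta> R * dth U \<theta> R * dR U \<theta> R / sqrt (\<alpha> \<theta> R)
            + 2 * sqrt (\<alpha> \<theta> R) * dth (dth U) \<theta> R * dR U \<theta> R
            + 2 * sqrt (\<alpha> \<theta> R) * dth U \<theta> R * dth (dR U) \<theta> R)
         + exp (4 * U \<theta> R) / (2 * R\<^sup>2) *
           (4 * dth U \<theta> R * sqrt (\<alpha> \<theta> R) * dth A \<theta> R * dR A \<theta> R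
            + dth \<alpha> \<theta> R * dth A \<theta> R * dR A \<theta> R / (2 * sqrt (\<alpha> \<theta> R))
            + sqrt (\<alpha> \<theta> R) * dth (dth A) \<theta> R * dR A \<theta> R
            + sqrt (\<alpha> \<theta> R) * dth A \<theta> R * dth (dR A) \<theta> R)" (is "_ = ?D")
proof -
  note d\<theta> = smooth_periodic_has_derivative_dth[OF _ R, of _ \<theta>]
  have "((\<lambda>t. energy_flux \<alpha> U A t R) has_real_derivative ?D) (at \<theta>)"
    unfolding energy_flux_def
    by (rule DERIV_energy_flux[OF d\<theta>[OF smooth_alpha] d\<theta>[OF smooth_U]
          d\<theta>[OF smooth_periodic_dR[OF smooth_U]] d\<theta>[OF smooth_periodic_dth[OF smooth_U]]
          d\<theta>[OF smooth_periodic_dR[OF smooth_A]] d\<theta>[OF smooth_periodic_dth[OF smooth_A]] alpha_pos[OF R]])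
  moreover from this show "dth (energy_flux \<alpha> U A) \<theta> R = ?D"
    unfolding dth_def by (rule DERIV_imp_deriv)
  ultimately show "((\<lambda>t. energy_flux \<alpha> U A t R) has_real_derivative dth (energy_flux \<alpha> U A) \<theta> R) (at \<theta>)"
    by simp
qed

lemma modified_density_has_derivative:
  assumes R: "R \<in> {Rs<..Ri}"
  shows "((\<lambda>r. modified_density \<alpha> \<beta> U A K \<theta> r) has_real_derivative
           dth (energy_flux \<alpha> U A) \<theta> R - energy_dissipation \<alpha> \<beta> U A K \<theta> R) (at R within {Rs<..Ri})"
proof -
  note dR_within = has_field_derivative_at_within[OF smooth_periodic_has_derivative_dR[OF _ R, of _ \<theta>]]
  note density_derivative = DERIV_modified_density[OF dR_within[OF smooth_alpha] dR_within[OF smooth_U]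
      dR_within[OF smooth_periodic_dR[OF smooth_U]] dR_within[OF smooth_periodic_dth[OF smooth_U]]
      dR_within[OF smooth_periodic_dR[OF smooth_A]] dR_within[OF smooth_periodic_dth[OF smooth_A]]
      beta_has_derivative[OF R] alpha_pos[OF R] R_pos[OF R]]
  show ?thesis
    unfolding modified_density_def hdens_def
    by (rule DERIV_cong[OF density_derivative],
        unfold energy_flux_dth(2)[OF R] energy_dissipation_def
          smooth_periodic_dR_dth_commute[OF smooth_U R] smooth_periodic_dR_dth_commute[OF smooth_A R],
        rule conservation_identity[OF alpha_pos[OF R] R_pos[OF R] _ dR_beta_eq[OF R] dR_alpha_eq[OF R]
          wave_U[OF R] wave_A[OF R]])
       (simp add: hdens_def)
qed

lemma energy_dissipation_nonneg:
  "R \<in> {Rs<..Ri} \<Longrightarrow> 0 \<le> energy_dissipation \<alpha> \<beta> U A K \<theta> R"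
  unfolding energy_dissipation_def
  by (rule energy_dissipation_bounds(1)[OF alpha_pos R_pos exp_gt_zero exp_gt_zero])

lemma energy_dissipation_le:
  "R \<in> {Rs<..Ri} \<Longrightarrow> energy_dissipation \<alpha> \<beta> U A K \<theta> R \<le> 4 / R * modified_density \<alpha> \<beta> U A K \<theta> R"
  unfolding energy_dissipation_def modified_density_def hdens_def
  by (rule energy_dissipation_bounds(2)[OF alpha_pos R_pos exp_gt_zero exp_gt_zero])

lemma energy_flux_periodic:
  assumes R: "R \<in> {Rs<..Ri}"
  shows "energy_flux \<alpha> U A (\<theta> + 1) R = energy_flux \<alpha> U A \<theta> R"
  unfolding energy_flux_def
  by (simp add: smooth_periodic_periodic[OF _ R] smooth_alpha smooth_U smooth_A
                smooth_periodic_dth smooth_periodic_dR)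

context
  fixes T :: "'a::topological_space set" and h1 h2 :: "'a \<Rightarrow> real"
  assumes h: "continuous_on T h1" "continuous_on T h2" "\<And>x. x \<in> T \<Longrightarrow> h2 x \<in> {Rs<..Ri}"
begin

lemma hdens_continuous_on_compose:
  "continuous_on T (\<lambda>x. hdens \<alpha> U A (h1 x) (h2 x))"
  unfolding hdens_def
  by (intro continuous_intros fields_continuous_on_compose h)
     (use Rs_pos in \<open>auto dest!: h(3) simp: alpha_nonzero\<close>)

lemma modified_density_continuous_on_compose:
  "continuous_on T (\<lambda>x. modified_density \<alpha> \<beta> U A K (h1 x) (h2 x))"
  unfolding modified_density_def hdens_def
  by (intro continuous_intros fields_continuous_on_compose beta_continuous_on_compose h)
     (use Rs_pos in \<open>auto dest!: h(3) simp: alpha_nonzero\<close>)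

lemma energy_dissipation_continuous_on_compose:
  "continuous_on T (\<lambda>x. energy_dissipation \<alpha> \<beta> U A K (h1 x) (h2 x))"
  unfolding energy_dissipation_def
  by (intro continuous_intros fields_continuous_on_compose beta_continuous_on_compose h)
     (use Rs_pos in \<open>auto dest!: h(3) simp: alpha_nonzero\<close>)

lemma dth_energy_flux_continuous_on_compose:
  "continuous_on T (\<lambda>x. dth (energy_flux \<alpha> U A) (h1 x) (h2 x))"
proof (rule continuous_on_eq)
  show "continuous_on T (\<lambda>x.
           (dth \<alpha> (h1 x) (h2 x) * dth U (h1 x) (h2 x) * dR U (h1 x) (h2 x) / sqrt (\<alpha> (h1 x) (h2 x))
            + 2 * sqrt (\<alpha> (h1 x) (h2 x)) * dth (dth U) (h1 x) (h2 x) * dR U (h1 x) (h2 x)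
            + 2 * sqrt (\<alpha> (h1 x) (h2 x)) * dth U (h1 x) (h2 x) * dth (dR U) (h1 x) (h2 x))
         + exp (4 * U (h1 x) (h2 x)) / (2 * (h2 x)\<^sup>2) *
           (4 * dth U (h1 x) (h2 x) * sqrt (\<alpha> (h1 x) (h2 x)) * dth A (h1 x) (h2 x) * dR A (h1 x) (h2 x)
            + dth \<alpha> (h1 x) (h2 x) * dth A (h1 x) (h2 x) * dR A (h1 x) (h2 x) / (2 * sqrt (\<alpha> (h1 x) (h2 x)))
            + sqrt (\<alpha> (h1 x) (h2 x)) * dth (dth A) (h1 x) (h2 x) * dR A (h1 x) (h2 x)
            + sqrt (\<alpha> (h1 x) (h2 x)) * dth A (h1 x) (h2 x) * dth (dR A) (h1 x) (h2 x)))"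
    by (intro continuous_intros fields_continuous_on_compose h) (use Rs_pos in \<open>auto dest!: h(3) simp: alpha_nonzero\<close>)
qed (simp add: energy_flux_dth(2)[OF h(3)])

end

lemma modified_density_integrable: "R \<in> {Rs<..Ri} \<Longrightarrow>
    (\<lambda>\<theta>. modified_density \<alpha> \<beta> U A K \<theta> R) integrable_on {0..1}"
  by (rule integrable_continuous_interval,
      rule modified_density_continuous_on_compose[OF continuous_on_id continuous_on_const])

lemma modified_energy_eq_integral:
  assumes R: "R \<in> {Rs<..Ri}"
  shows "modified_energy \<alpha> \<beta> U A K R = integral {0..1} (\<lambda>\<theta>. modified_density \<alpha> \<beta> U A K \<theta> R)"
proof -
  have "(\<lambda>\<theta>. hdens \<alpha> U A \<theta> R) integrable_on {0..1}"
    by (rule integrable_continuous_interval,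
        rule hdens_continuous_on_compose[OF continuous_on_id continuous_on_const R])
  with modified_density_integrable[OF R]
  have "integral {0..1} (\<lambda>\<theta>. modified_density \<alpha> \<beta> U A K \<theta> R)
          = energy \<alpha> U A R + integral {0..1} (\<lambda>\<theta>. modified_density \<alpha> \<beta> U A K \<theta> R - hdens \<alpha> U A \<theta> R)"
    unfolding energy_def by (simp add: integral_diff)
  then show ?thesis
    unfolding modified_energy_def by (simp add: modified_density_def)
qed

lemma energy_dissipation_integrable: "R \<in> {Rs<..Ri} \<Longrightarrow>
    (\<lambda>\<theta>. energy_dissipation \<alpha> \<beta> U A K \<theta> R) integrable_on {0..1}"
  by (rule integrable_continuous_interval,
      rule energy_dissipation_continuous_on_compose[OF continuous_on_id continuous_on_const])

lemma integral_dth_energy_flux: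
  assumes R: "R \<in> {Rs<..Ri}"
  shows "((\<lambda>\<theta>. dth (energy_flux \<alpha> U A) \<theta> R) has_integral 0) {0..1}"
proof -
  have "((\<lambda>\<theta>. dth (energy_flux \<alpha> U A) \<theta> R) has_integral
          energy_flux \<alpha> U A 1 R - energy_flux \<alpha> U A 0 R) {0..1}"
  proof (rule fundamental_theorem_of_calculus)
    fix \<theta> :: real
    show "((\<lambda>\<theta>. energy_flux \<alpha> U A \<theta> R) has_vector_derivative dth (energy_flux \<alpha> U A) \<theta> R)
            (at \<theta> within {0..1})"
      using energy_flux_dth(1)[OF R, of \<theta>]
      by (simp add: has_real_derivative_iff_has_vector_derivative has_vector_derivative_at_within)
  qed simp
  then show ?thesis
    using energy_flux_periodic[OF R, of 0] by simp
qed

lemma modified_energy_has_derivative: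
  assumes R: "R \<in> {Rs<..Ri}"
  shows "(modified_energy \<alpha> \<beta> U A K has_real_derivative
           - integral {0..1} (\<lambda>\<theta>. energy_dissipation \<alpha> \<beta> U A K \<theta> R)) (at R within {Rs<..Ri})"
proof -
  have "((\<lambda>r. integral (cbox 0 1) (\<lambda>\<theta>. modified_density \<alpha> \<beta> U A K \<theta> r)) has_real_derivative
          integral (cbox 0 1) (\<lambda>\<theta>. dth (energy_flux \<alpha> U A) \<theta> R - energy_dissipation \<alpha> \<beta> U A K \<theta> R))
          (at R within {Rs<..Ri})"
  proof (rule leibniz_rule_field_derivative)
    fix r \<theta> assume "r \<in> {Rs<..Ri}"
    then show "((\<lambda>r. modified_density \<alpha> \<beta> U A K \<theta> r) has_real_derivative
                 dth (energy_flux \<alpha> U A) \<theta> r - energy_dissipation \<alpha> \<beta> U A K \<theta> r) (at r within {Rs<..Ri})"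
      by (rule modified_density_has_derivative)
  next
    fix r assume "r \<in> {Rs<..Ri}"
    then show "(\<lambda>\<theta>. modified_density \<alpha> \<beta> U A K \<theta> r) integrable_on cbox 0 1"
      unfolding box_real by (rule modified_density_integrable)
  next
    show "continuous_on ({Rs<..Ri} \<times> cbox 0 1)
            (\<lambda>(r, \<theta>). dth (energy_flux \<alpha> U A) \<theta> r - energy_dissipation \<alpha> \<beta> U A K \<theta> r)"
      unfolding case_prod_beta
      by (intro continuous_intros dth_energy_flux_continuous_on_compose energy_dissipation_continuous_on_compose
            continuous_on_fst continuous_on_snd continuous_on_id) auto
  qed (use R in auto)
  moreover have "integral {0..1} (\<lambda>\<theta>. dth (energy_flux \<alpha> U A) \<theta> R - energy_dissipation \<alpha> \<beta> U A K \<theta> R)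
                   = - integral {0..1} (\<lambda>\<theta>. energy_dissipation \<alpha> \<beta> U A K \<theta> R)"
    using has_integral_diff[OF integral_dth_energy_flux[OF R] integrable_integral[OF energy_dissipation_integrable[OF R]]]
    by (simp add: integral_unique)
  ultimately have "((\<lambda>r. integral {0..1} (\<lambda>\<theta>. modified_density \<alpha> \<beta> U A K \<theta> r)) has_real_derivative
                     - integral {0..1} (\<lambda>\<theta>. energy_dissipation \<alpha> \<beta> U A K \<theta> R)) (at R within {Rs<..Ri})"
    by (simp add: box_real)
  then show ?thesis
    by (rule has_field_derivative_transform_within[OF _ zero_less_one R]) (simp add: modified_energy_eq_integral)
qed

lemma modified_energy_derivative_lower_bound:
  assumes R: "R \<in> {Rs<..Ri}"
  shows "- (4 / R * modified_energy \<alpha> \<beta> U A K R)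
           \<le> - integral {0..1} (\<lambda>\<theta>. energy_dissipation \<alpha> \<beta> U A K \<theta> R)"
proof -
  have "integral {0..1} (\<lambda>\<theta>. energy_dissipation \<alpha> \<beta> U A K \<theta> R)
          \<le> integral {0..1} (\<lambda>\<theta>. 4 / R * modified_density \<alpha> \<beta> U A K \<theta> R)"
    by (rule integral_le[OF energy_dissipation_integrable[OF R]
          integrable_on_mult_right[OF modified_density_integrable[OF R]] energy_dissipation_le[OF R]])
  then show ?thesis
    by (simp add: modified_energy_eq_integral[OF R])
qed

end

theorem mainTheorem5:
  fixes Rs Ri K :: real and \<alpha> \<nu> \<beta> U A G H :: "real \<Rightarrow> real \<Rightarrow> real"
  assumes "T2_vacuum Rs Ri K \<alpha> \<nu> \<beta> U A G H"
  shows "(\<forall>R\<in>{Rs<..Ri}.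
            (modified_energy \<alpha> \<beta> U A K has_real_derivative
               - integral {0..1} (\<lambda>\<theta>. exp (2 * \<beta> \<theta> R) * K\<^sup>2 / (sqrt (\<alpha> \<theta> R) * R ^ 5)
                   + 2 * (dR U \<theta> R)\<^sup>2 / (sqrt (\<alpha> \<theta> R) * R)
                   + sqrt (\<alpha> \<theta> R) * exp (4 * U \<theta> R) * (dth A \<theta> R)\<^sup>2 / (2 * R ^ 3)))
              (at R within {Rs<..Ri})
          \<and> - integral {0..1} (\<lambda>\<theta>. exp (2 * \<beta> \<theta> R) * K\<^sup>2 / (sqrt (\<alpha> \<theta> R) * R ^ 5)
                   + 2 * (dR U \<theta> R)\<^sup>2 / (sqrt (\<alpha> \<theta> R) * R)
                   + sqrt (\<alpha> \<theta> R) * exp (4 * U \<theta> R) * (dth A \<theta> R)\<^sup>2 / (2 * R ^ 3)) \<le> 0)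
       \<and> (\<forall>Rk\<in>{Rs<..Ri}. modified_energy \<alpha> \<beta> U A K Rk
                          \<le> modified_energy \<alpha> \<beta> U A K Ri * (Ri / Rk) ^ 4)"
proof -
  interpret T2_vacuum_solution Rs Ri K \<alpha> \<nu> \<beta> U A G H
    by (rule T2_vacuum_solution.intro) (rule assms)
  have decay: "(modified_energy \<alpha> \<beta> U A K has_real_derivative
                  - integral {0..1} (\<lambda>\<theta>. energy_dissipation \<alpha> \<beta> U A K \<theta> R)) (at R within {Rs<..Ri})
               \<and> - integral {0..1} (\<lambda>\<theta>. energy_dissipation \<alpha> \<beta> U A K \<theta> R) \<le> 0"
    if "R \<in> {Rs<..Ri}" for R
    using modified_energy_has_derivative[OF that]
      integral_nonneg[OF energy_dissipation_integrable[OF that] energy_dissipation_nonneg[OF that]]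
    by simp
  have lower_bound: "- (real 4 / R * modified_energy \<alpha> \<beta> U A K R)
                      \<le> - integral {0..1} (\<lambda>\<theta>. energy_dissipation \<alpha> \<beta> U A K \<theta> R)"
    if "R \<in> {Rs<..Ri}" for R
    using modified_energy_derivative_lower_bound[OF that] by simp
  have growth: "modified_energy \<alpha> \<beta> U A K Rk \<le> modified_energy \<alpha> \<beta> U A K Ri * (Ri / Rk) ^ 4"
    if "Rk \<in> {Rs<..Ri}" for Rk
    using power_weighted_growth_bound[OF modified_energy_has_derivative lower_bound
            less_imp_le[OF Rs_pos] that] .
  show ?thesis
    using decay growth unfolding energy_dissipation_def by blast
qed

end
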